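(* Let $a,c,p\in\mathbb{C}$ with $-c\notin\mathbb{N}\cup\{0\}$. Define the sequence $(u_n)_{n\ge 0}$ by $u_0=1$, $u_1=a/c+p$ and, for all integers $n\ge 1$, \[ u_{n+1}=\frac{a+cp+2np+n}{(n+1)(c+n)}\,u_n-\frac{p(p+1)}{(n+1)(c+n)}\,u_{n-1}. \] Then \[ e^{pz}M(a,c;z)=\sum_{n=0}^\infty u_n z^n,\qquad z\in\mathbb{C}. \]
   Context: For $a\in\mathbb{C}$, $(a)_n=a(a+1)\cdots(a+n-1)$ denotes the Pochhammer symbol, with $(a)_0=1$. For $a,c\in\mathbb{C}$ with $-c\notin\mathbb{N}\cup\{0\}$, the confluent hypergeometric (Kummer) function is $M(a,c;z)=\sum_{n=0}^\infty \frac{(a)_n}{(c)_n\,n!}z^n$, $z\in\mathbb{C}$. *)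

theory Defs
  imports "HOL-Analysis.Analysis"
begin

definition kummerM :: "complex \<Rightarrow> complex \<Rightarrow> complex \<Rightarrow> complex" where
  "kummerM a c z = (\<Sum>n. pochhammer a n / (pochhammer c n * of_nat (fact n)) * z ^ n)"

fun useq :: "complex \<Rightarrow> complex \<Rightarrow> complex \<Rightarrow> nat \<Rightarrow> complex" where
  "useq a c p 0 = 1"
| "useq a c p (Suc 0) = a / c + p"
| "useq a c p (Suc (Suc n)) =
     (let m = of_nat (Suc n) :: complex in
       (a + c * p + 2 * m * p + m) / ((m + 1) * (c + m)) * useq a c p (Suc n)
       - p * (p + 1) / ((m + 1) * (c + m)) * useq a c p n)"

end

(*
  As a formal power series, M = M(a,c;z) solves Kummer's equation z M'' + (c - z) M' = a M.
  Hence V = e^(pz) M solves z V'' + (c - (2p + 1) z) V' = (a + cp - p (p + 1) z) V, and comparing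
  coefficients of z^(n+1) in this equation gives exactly the three-term recurrence defining u_n,
  so the coefficients of V are the u_n. Both factors have infinite radius of convergence, so
  the formal product evaluates to e^(pz) M(a,c;z) everywhere.
*)
theory Submission
  imports Defs
begin

definition kummer_fps :: "'a::field_char_0 \<Rightarrow> 'a \<Rightarrow> 'a fps" where
  "kummer_fps a c = Abs_fps (\<lambda>n. pochhammer a n / (pochhammer c n * of_nat (fact n)))"

(* No condition on c is needed: if c + n = 0, both sides are 0 by division by zero. *)
lemma kummer_fps_nth_Suc:
  "fps_nth (kummer_fps a c) (Suc n)
     = (a + of_nat n) / ((c + of_nat n) * of_nat (Suc n)) * fps_nth (kummer_fps a c) n"
  by (simp add: kummer_fps_def pochhammer_Suc field_simps del: of_nat_Suc)

lemma add_of_nat_nonzero: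
  fixes c :: "'a::ring_1"
  assumes "\<forall>k::nat. c \<noteq> - of_nat k"
  shows "c + of_nat n \<noteq> 0"
  using assms by (metis add.commute neg_eq_iff_add_eq_0)

lemma kummer_fps_ode:
  fixes a c :: "'a::field_char_0"
  assumes c: "\<forall>k::nat. c \<noteq> - of_nat k"
  shows "fps_X * fps_deriv (fps_deriv (kummer_fps a c)) + (fps_const c - fps_X) * fps_deriv (kummer_fps a c)
           = fps_const a * kummer_fps a c"
proof (rule fps_ext)
  fix n
  have "of_nat (Suc n) * (c + of_nat n) * fps_nth (kummer_fps a c) (Suc n) = (a + of_nat n) * fps_nth (kummer_fps a c) n"
    using add_of_nat_nonzero[OF c] by (simp add: kummer_fps_nth_Suc del: of_nat_Suc)
  then show "fps_nth (fps_X * fps_deriv (fps_deriv (kummer_fps a c)) + (fps_const c - fps_X) * fps_deriv (kummer_fps a c)) n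
               = fps_nth (fps_const a * kummer_fps a c) n"
    by (cases n) (simp_all add: fps_X_mult_nth algebra_simps)
qed

lemma fps_exp_mult_kummer_ode:
  fixes M :: "'a::field_char_0 fps" and a c p :: 'a
  assumes M: "fps_X * fps_deriv (fps_deriv M) + (fps_const c - fps_X) * fps_deriv M = fps_const a * M"
  defines "V \<equiv> fps_exp p * M"
  shows "fps_X * fps_deriv (fps_deriv V) + (fps_const c - fps_const (2 * p + 1) * fps_X) * fps_deriv V
           = (fps_const (c * p + a) - fps_const (p * (p + 1)) * fps_X) * V"
proof -
  have V': "fps_deriv V = fps_const p * V + fps_exp p * fps_deriv M"
    by (simp add: V_def fps_deriv_mult algebra_simps)
  have V'': "fps_deriv (fps_deriv V)
               = fps_const p * fps_deriv V + fps_const p * fps_exp p * fps_deriv M + fps_exp p * fps_deriv (fps_deriv M)"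
    by (simp add: V' fps_deriv_mult algebra_simps)
  have "fps_X * fps_deriv (fps_deriv V) + (fps_const c - fps_const (2 * p + 1) * fps_X) * fps_deriv V
          = fps_exp p * (fps_X * fps_deriv (fps_deriv M) + (fps_const c - fps_X) * fps_deriv M)
            + (fps_const (c * p) - fps_const (p * (p + 1)) * fps_X) * V"
  proof -
    have const_splits: "fps_const (2 * p + 1) = 2 * fps_const p + 1" "fps_const (c * p) = fps_const c * fps_const p"
      "fps_const (p * (p + 1)) = fps_const p * fps_const p + fps_const p"
      by (simp_all add: fps_const_add fps_const_mult algebra_simps)
    show ?thesis
      unfolding V'' unfolding V' unfolding const_splits V_def by algebra
  qed
  also have "\<dots> = fps_exp p * (fps_const a * M) + (fps_const (c * p) - fps_const (p * (p + 1)) * fps_X) * V"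
    by (simp only: M)
  also have "\<dots> = (fps_const (c * p + a) - fps_const (p * (p + 1)) * fps_X) * V"
    unfolding V_def fps_const_add[symmetric] by algebra
  finally show ?thesis .
qed

lemma fps_nth_Suc_Suc_of_kummer_exp_ode:
  fixes V :: "'a::comm_ring_1 fps" and a c p :: 'a and n :: nat
  assumes "fps_X * fps_deriv (fps_deriv V) + (fps_const c - fps_const (2 * p + 1) * fps_X) * fps_deriv V
             = (fps_const (c * p + a) - fps_const (p * (p + 1)) * fps_X) * V"
  defines "m \<equiv> of_nat (Suc n)"
  shows "(m + 1) * (c + m) * fps_nth V (Suc (Suc n))
           = (a + c * p + 2 * m * p + m) * fps_nth V (Suc n) - p * (p + 1) * fps_nth V n"
proof -
  have "fps_nth (fps_X * fps_deriv (fps_deriv V) + (fps_const c - fps_const (2 * p + 1) * fps_X) * fps_deriv V) (Suc n)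
          = fps_nth ((fps_const (c * p + a) - fps_const (p * (p + 1)) * fps_X) * V) (Suc n)"
    using assms by simp
  then show ?thesis
    by (simp add: m_def fps_X_mult_nth algebra_simps)
qed

lemma solve_nonzero_mult_eq_diff:
  fixes x :: "'a::field"
  assumes "d \<noteq> 0" "d * x = s * u - t * v"
  shows "x = s / d * u - t / d * v"
  using assms by (simp add: field_simps)

lemma fps_nth_fps_exp_mult_kummer_fps:
  fixes a c p :: complex
  assumes c: "\<forall>k::nat. c \<noteq> - of_nat k"
  shows "fps_nth (fps_exp p * kummer_fps a c) n = useq a c p n"
proof (induction n rule: induct_nat_012[case_names 0 1 Suc_Suc])
  case (Suc_Suc n)
  have "(of_nat (Suc n) + 1) * (c + of_nat (Suc n)) \<noteq> (0::complex)"
    using add_of_nat_nonzero[OF c, of "Suc n"] by (metis add.commute mult_eq_0_iff of_nat_Suc of_nat_neq_0)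
  moreover note fps_nth_Suc_Suc_of_kummer_exp_ode[OF fps_exp_mult_kummer_ode[OF kummer_fps_ode[OF c]], of n]
  ultimately have "fps_nth (fps_exp p * kummer_fps a c) (Suc (Suc n))
      = (a + c * p + 2 * of_nat (Suc n) * p + of_nat (Suc n)) / ((of_nat (Suc n) + 1) * (c + of_nat (Suc n)))
          * fps_nth (fps_exp p * kummer_fps a c) (Suc n)
        - p * (p + 1) / ((of_nat (Suc n) + 1) * (c + of_nat (Suc n))) * fps_nth (fps_exp p * kummer_fps a c) n"
    by (rule solve_nonzero_mult_eq_diff)
  then show ?case
    using Suc_Suc by (simp only: useq.simps Let_def)
qed (simp_all add: fps_mult_nth kummer_fps_def)

lemma tendsto_add_of_nat_divide_add_of_nat:
  "(\<lambda>n. (a + of_nat n) / (c + of_nat n)) \<longlonglongrightarrow> (1::'a::real_normed_field)"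
proof -
  have c_inf: "filterlim (\<lambda>n. c + of_nat n) at_infinity sequentially"
    by (rule tendsto_add_filterlim_at_infinity[OF tendsto_const tendsto_of_nat])
  have "(\<lambda>n. 1 + (a - c) / (c + of_nat n)) \<longlonglongrightarrow> 1 + 0"
    by (intro tendsto_add tendsto_const tendsto_divide_0[OF tendsto_const c_inf])
  moreover have "\<forall>\<^sub>F n in sequentially. 1 + (a - c) / (c + of_nat n) = (a + of_nat n) / (c + of_nat n)"
    using filterlim_at_infinity_imp_eventually_ne[OF c_inf, of 0]
    by eventually_elim (simp add: field_simps)
  ultimately show ?thesis
    by (simp add: tendsto_cong)
qed

lemma summable_ratio_test_tendsto_0:
  fixes f :: "nat \<Rightarrow> 'a::banach"
  assumes "r \<longlonglongrightarrow> 0" "\<And>n. norm (f (Suc n)) \<le> r n * norm (f n)"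
  shows "summable f"
proof -
  have "\<forall>\<^sub>F n in sequentially. r n < 1 / 2"
    using assms(1) by (rule order_tendstoD(2)) simp
  then obtain N where N: "\<And>n. n \<ge> N \<Longrightarrow> r n < 1 / 2"
    unfolding eventually_sequentially by blast
  show ?thesis
  proof (rule summable_ratio_test[of "1 / 2" N])
    fix n
    assume "n \<ge> N"
    have "norm (f (Suc n)) \<le> r n * norm (f n)"
      by (rule assms(2))
    also have "\<dots> \<le> 1 / 2 * norm (f n)"
      using N[OF \<open>n \<ge> N\<close>] by (intro mult_right_mono) simp_all
    finally show "norm (f (Suc n)) \<le> 1 / 2 * norm (f n)" .
  qed simp
qed

lemma fps_conv_radius_kummer_fps:
  fixes a c :: "'a::{banach, real_normed_field}"
  shows "fps_conv_radius (kummer_fps a c) = \<infinity>"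
  unfolding fps_conv_radius_def
proof (rule conv_radius_inftyI'')
  fix z :: 'a
  define r where "r n = (a + of_nat n) / (c + of_nat n) / of_nat (Suc n) * z" for n
  have "r \<longlonglongrightarrow> 0"
    unfolding r_def
    by (intro tendsto_mult_left_zero tendsto_divide_0[OF tendsto_add_of_nat_divide_add_of_nat]
        filterlim_compose[OF tendsto_of_nat filterlim_Suc])
  moreover have "norm (fps_nth (kummer_fps a c) (Suc n) * z ^ Suc n)
                   \<le> norm (r n) * norm (fps_nth (kummer_fps a c) n * z ^ n)" for n
  proof -
    have "fps_nth (kummer_fps a c) (Suc n) * z ^ Suc n = r n * (fps_nth (kummer_fps a c) n * z ^ n)"
      by (simp add: r_def kummer_fps_nth_Suc mult_ac del: of_nat_Suc)
    then show ?thesis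
      by (simp only: norm_mult order_refl)
  qed
  ultimately show "summable (\<lambda>n. fps_nth (kummer_fps a c) n * z ^ n)"
    by (rule summable_ratio_test_tendsto_0[OF tendsto_norm_zero])
qed

lemma eval_fps_kummer_fps: "eval_fps (kummer_fps a c) z = kummerM a c z"
  by (simp add: eval_fps_def kummer_fps_def kummerM_def)

theorem theorem2p1:
  fixes a c p z :: complex
  assumes "\<forall>k::nat. c \<noteq> - of_nat k"
  shows "(\<lambda>n. useq a c p n * z ^ n) sums (exp (p * z) * kummerM a c z)"
proof -
  have "fps_conv_radius (fps_exp p * kummer_fps a c) = \<infinity>"
    using fps_conv_radius_mult[of "fps_exp p" "kummer_fps a c"] by (simp add: fps_conv_radius_kummer_fps)
  then have "(\<lambda>n. fps_nth (fps_exp p * kummer_fps a c) n * z ^ n) sums eval_fps (fps_exp p * kummer_fps a c) z"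
    by (intro sums_eval_fps) simp
  also have "eval_fps (fps_exp p * kummer_fps a c) z = exp (p * z) * kummerM a c z"
    by (simp add: eval_fps_mult fps_conv_radius_kummer_fps eval_fps_kummer_fps)
  finally show ?thesis
    by (simp add: fps_nth_fps_exp_mult_kummer_fps[OF assms])
qed

end
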